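(* For every positive integer $d$, every graph $G$ that is isomorphic to the intersection graph of a finite collection of closed balls in $\mathbb{R}^d$ has minimum degree at most $(2\tau(G)+1)\cdot 3^d$. In particular, the class of intersection graphs of balls in $\mathbb{R}^d$ is degree-bounded with degree-bounding function $f_d(\tau)=(2\tau+1)3^d$.
   Context: The intersection graph of a finite collection $\mathcal{B}$ of sets has vertex set $\mathcal{B}$, two distinct members being adjacent if they intersect. A closed ball in $\mathbb{R}^d$ is a set $\{x:\|x-p\|_2\le r\}$ with $r>0$. The biclique number $\tau(G)$ is the largest $t$ such that $G$ has a (not necessarily induced) subgraph isomorphic to $K_{t,t}$. A class $\mathcal{F}$ is degree-bounded with degree-bounding function $f$ if $\delta(G)\le f(\tau(G))$ for all $G\in\mathcal{F}$, where $\delta$ is minimum degree. *)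

theory Defs
  imports "HOL-Analysis.Analysis"
begin

definition simple_graph :: "'v set \<Rightarrow> ('v \<Rightarrow> 'v \<Rightarrow> bool) \<Rightarrow> bool" where
  "simple_graph V E \<longleftrightarrow> finite V \<and> (\<forall>u\<in>V. \<forall>v\<in>V. E u v \<longleftrightarrow> E v u) \<and> (\<forall>v\<in>V. \<not> E v v)"

definition degree :: "'v set \<Rightarrow> ('v \<Rightarrow> 'v \<Rightarrow> bool) \<Rightarrow> 'v \<Rightarrow> nat" where
  "degree V E v = card {u\<in>V. E v u}"

definition min_degree :: "'v set \<Rightarrow> ('v \<Rightarrow> 'v \<Rightarrow> bool) \<Rightarrow> nat" where
  "min_degree V E = Min (degree V E ` V)"

definition has_biclique :: "'v set \<Rightarrow> ('v \<Rightarrow> 'v \<Rightarrow> bool) \<Rightarrow> nat \<Rightarrow> bool" where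
  "has_biclique V E t \<longleftrightarrow> (\<exists>A B. A \<subseteq> V \<and> B \<subseteq> V \<and> A \<inter> B = {} \<and>
      card A = t \<and> card B = t \<and> (\<forall>a\<in>A. \<forall>b\<in>B. E a b))"

definition biclique_number :: "'v set \<Rightarrow> ('v \<Rightarrow> 'v \<Rightarrow> bool) \<Rightarrow> nat" where
  "biclique_number V E = Max {t. has_biclique V E t}"

definition closed_ball_set :: "'a::euclidean_space set \<Rightarrow> bool" where
  "closed_ball_set S \<longleftrightarrow> (\<exists>p r. r > 0 \<and> S = cball p r)"

definition iso_intersection_graph ::
  "'v set \<Rightarrow> ('v \<Rightarrow> 'v \<Rightarrow> bool) \<Rightarrow> 'a set set \<Rightarrow> bool" where
  "iso_intersection_graph V E \<B> \<longleftrightarrow> finite \<B> \<and>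
     (\<exists>f. bij_betw f V \<B> \<and> (\<forall>u\<in>V. \<forall>v\<in>V. u \<noteq> v \<longrightarrow> (E u v \<longleftrightarrow> f u \<inter> f v \<noteq> {})))"

end

theory Submission
  imports Defs
begin

text \<open>Take a vertex whose ball B(p, r) has the smallest radius. Every neighbour's ball meets
  B(p, r) and has radius at least r, so it contains a ball of radius r centred within 2r of p.
  Balls sharing a point form a clique, and a clique on 2t+2 vertices contains K_{t+1,t+1};
  so these radius-r balls cover every point at most 2\<tau>+1 times. They all lie in B(p, 3r),
  and comparing volumes bounds their number by (2\<tau>+1) 3^d.\<close>

definition clique :: "'v set \<Rightarrow> ('v \<Rightarrow> 'v \<Rightarrow> bool) \<Rightarrow> 'v set \<Rightarrow> bool" where
  "clique V E K \<longleftrightarrow> K \<subseteq> V \<and> (\<forall>u\<in>K. \<forall>w\<in>K. u \<noteq> w \<longrightarrow> E u w)"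

lemma min_degree_le_degree:
  assumes "finite V" and "v \<in> V"
  shows "min_degree V E \<le> degree V E v"
  using assms unfolding min_degree_def by simp

lemma le_biclique_number:
  assumes "finite V" and "has_biclique V E t"
  shows "t \<le> biclique_number V E"
proof -
  have "{t. has_biclique V E t} \<subseteq> {..card V}"
    using card_mono[OF \<open>finite V\<close>] unfolding has_biclique_def by fastforce
  then have "finite {t. has_biclique V E t}"
    using finite_subset by blast
  then show ?thesis
    unfolding biclique_number_def using assms(2) by simp
qed

lemma has_biclique_of_clique:
  assumes "finite K" and "clique V E K" and "2 * t \<le> card K"
  shows "has_biclique V E t"
proof -
  obtain A where A: "A \<subseteq> K" "card A = t"
    using obtain_subset_with_card_n[of t K] assms(3) by auto
  have "t \<le> card (K - A)"
    using A assms(1,3) by (simp add: card_Diff_subset finite_subset)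
  then obtain B where B: "B \<subseteq> K - A" "card B = t"
    by (rule obtain_subset_with_card_n)
  have "A \<subseteq> V" "B \<subseteq> V" "A \<inter> B = {}"
    using A(1) B(1) assms(2) unfolding clique_def by auto
  moreover have "\<forall>a\<in>A. \<forall>b\<in>B. E a b"
  proof (intro ballI)
    fix a b
    assume "a \<in> A" "b \<in> B"
    then have "a \<in> K" "b \<in> K" "a \<noteq> b"
      using A(1) B(1) by auto
    then show "E a b"
      using assms(2) unfolding clique_def by blast
  qed
  ultimately show ?thesis
    unfolding has_biclique_def using A(2) B(2) by blast
qed

lemma card_clique_le_biclique_number:
  assumes "finite V" and "clique V E K"
  shows "card K \<le> 2 * biclique_number V E + 1"
proof (rule ccontr)
  have "finite K"
    using assms finite_subset unfolding clique_def by blast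
  moreover assume "\<not> ?thesis"
  then have "2 * (biclique_number V E + 1) \<le> card K" by simp
  ultimately have "has_biclique V E (biclique_number V E + 1)"
    by (rule has_biclique_of_clique[OF _ assms(2)])
  then show False
    using le_biclique_number[OF assms(1)] by fastforce
qed

lemma cball_subset_cball_of_dist_le:
  fixes a :: "'a::metric_space"
  assumes "dist a' a + r \<le> r'"
  shows "cball a r \<subseteq> cball a' r'"
proof
  fix x
  assume "x \<in> cball a r"
  then show "x \<in> cball a' r'"
    using assms dist_triangle[of a' x a] by simp
qed

lemma cball_subset_cball_near:
  fixes c p :: "'a::real_normed_vector"
  assumes "0 < r" and "r \<le> R" and "dist c p \<le> R + r"
  shows "\<exists>q. dist p q \<le> 2 * r \<and> cball q r \<subseteq> cball c R"
proof (cases "dist c p \<le> R - r")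
  case True
  then have "cball p r \<subseteq> cball c R"
    by (intro cball_subset_cball_of_dist_le) (simp add: dist_commute)
  then show ?thesis
    using assms(1) by (intro exI[of _ p]) auto
next
  case False
  define D where "D = dist c p"
  define t where "t = (R - r) / D"
  define q where "q = c + t *\<^sub>R (p - c)"
  have "0 < D" and "0 \<le> t" and "t \<le> 1"
    using False assms(2) unfolding t_def D_def by (auto simp: divide_le_eq_1)
  have "t * D = R - r"
    using \<open>0 < D\<close> unfolding t_def by simp
  have cq: "dist c q = R - r"
    using \<open>0 \<le> t\<close> \<open>t * D = R - r\<close>
    unfolding q_def D_def by (simp add: dist_norm norm_minus_commute)
  have "p - q = (1 - t) *\<^sub>R (p - c)"
    unfolding q_def by (simp add: algebra_simps)
  then have "dist p q = (1 - t) * D"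
    using \<open>t \<le> 1\<close> unfolding D_def by (simp add: dist_norm norm_minus_commute)
  then have "dist p q \<le> 2 * r"
    using \<open>t * D = R - r\<close> assms(3) unfolding D_def by (simp add: algebra_simps)
  moreover have "cball q r \<subseteq> cball c R"
    using cq by (intro cball_subset_cball_of_dist_le) simp
  ultimately show ?thesis by blast
qed

text \<open>Packing by volume: balls of radius r with centres within s of p lie in B(p, r + s),
  and the sum of their indicators is at most k times the indicator of B(p, r + s).\<close>

lemma card_balls_bounded_ply:
  fixes q :: "'i \<Rightarrow> 'a::euclidean_space"
  assumes "finite N" and "0 < r" and "0 \<le> s"
    and near: "\<And>u. u \<in> N \<Longrightarrow> dist p (q u) \<le> s"
    and ply: "\<And>x. card {u\<in>N. x \<in> cball (q u) r} \<le> k"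
  shows "real (card N) * r ^ DIM('a) \<le> real k * (r + s) ^ DIM('a)"
proof -
  let ?ind = "\<lambda>u. indicator (cball (q u) r) :: 'a \<Rightarrow> real"
  let ?big = "indicator (cball p (r + s)) :: 'a \<Rightarrow> real"
  have sub: "cball (q u) r \<subseteq> cball p (r + s)" if "u \<in> N" for u
    using near[OF that] by (intro cball_subset_cball_of_dist_le) simp
  have pointwise: "(\<Sum>u\<in>N. ?ind u x) \<le> real k * ?big x" for x
  proof -
    have "(\<Sum>u\<in>N. ?ind u x) = real (card {u\<in>N. x \<in> cball (q u) r})"
      using assms(1) by (simp add: indicator_def sum.If_cases Int_def conj_commute)
    moreover have "{u\<in>N. x \<in> cball (q u) r} = {}" if "x \<notin> cball p (r + s)"
      using sub that by blast
    ultimately show ?thesis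
      using ply[of x] by (cases "x \<in> cball p (r + s)") simp_all
  qed
  have integrable: "integrable lborel (indicator (cball y \<rho>) :: 'a \<Rightarrow> real)" for y \<rho>
    using emeasure_lborel_cball_finite by (simp add: integrable_indicator_iff)
  have "(\<Sum>u\<in>N. measure lborel (cball (q u) r)) = (LINT x|lborel. (\<Sum>u\<in>N. ?ind u x))"
    using integrable by (subst Bochner_Integration.integral_sum) auto
  also have "\<dots> \<le> (LINT x|lborel. real k * ?big x)"
    using integrable pointwise by (intro integral_mono) auto
  also have "\<dots> = real k * measure lborel (cball p (r + s))"
    by simp
  finally have "(real (card N) * r ^ DIM('a)) * unit_ball_vol DIM('a)
      \<le> (real k * (r + s) ^ DIM('a)) * unit_ball_vol DIM('a)"
    using assms(2,3) by (simp add: content_cball algebra_simps)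
  then show ?thesis
    by (simp add: mult_le_cancel_right)
qed

lemma degree_le_of_smallest_ball:
  fixes c :: "'v \<Rightarrow> 'a::euclidean_space"
  assumes "simple_graph V E" and "v \<in> V"
    and radius_pos: "\<And>u. u \<in> V \<Longrightarrow> 0 < \<rho> u"
    and smallest: "\<And>u. u \<in> V \<Longrightarrow> \<rho> v \<le> \<rho> u"
    and adj: "\<And>u w. u \<in> V \<Longrightarrow> w \<in> V \<Longrightarrow> u \<noteq> w \<Longrightarrow>
               E u w \<longleftrightarrow> cball (c u) (\<rho> u) \<inter> cball (c w) (\<rho> w) \<noteq> {}"
  shows "degree V E v \<le> (2 * biclique_number V E + 1) * 3 ^ DIM('a)"
proof -
  define N where "N = {u\<in>V. E v u}"
  let ?r = "\<rho> v" and ?p = "c v" and ?K = "2 * biclique_number V E + 1"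
  have "finite V" and irrefl: "\<not> E v v"
    using assms(1,2) unfolding simple_graph_def by blast+
  have "\<forall>u\<in>N. \<exists>q. dist ?p q \<le> 2 * ?r \<and> cball q ?r \<subseteq> cball (c u) (\<rho> u)"
  proof
    fix u
    assume "u \<in> N"
    then have "u \<in> V" "u \<noteq> v" "E v u"
      using irrefl unfolding N_def by auto
    then obtain x where "x \<in> cball ?p ?r" "x \<in> cball (c u) (\<rho> u)"
      using adj[OF \<open>v \<in> V\<close>, of u] by auto
    then have "dist (c u) ?p \<le> \<rho> u + ?r"
      using dist_triangle[of "c u" ?p x] by (simp add: dist_commute)
    then show "\<exists>q. dist ?p q \<le> 2 * ?r \<and> cball q ?r \<subseteq> cball (c u) (\<rho> u)"
      by (rule cball_subset_cball_near[OF radius_pos[OF \<open>v \<in> V\<close>] smallest[OF \<open>u \<in> V\<close>]])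
  qed
  then obtain q where "\<forall>u\<in>N. dist ?p (q u) \<le> 2 * ?r \<and> cball (q u) ?r \<subseteq> cball (c u) (\<rho> u)"
    by (rule bchoice[THEN exE])
  then have near: "\<And>u. u \<in> N \<Longrightarrow> dist ?p (q u) \<le> 2 * ?r"
    and inside: "\<And>u. u \<in> N \<Longrightarrow> cball (q u) ?r \<subseteq> cball (c u) (\<rho> u)"
    by auto
  have "clique V E {u\<in>N. x \<in> cball (q u) ?r}" for x
    unfolding clique_def
  proof (intro conjI ballI impI)
    fix u w
    assume u: "u \<in> {u\<in>N. x \<in> cball (q u) ?r}" and w: "w \<in> {u\<in>N. x \<in> cball (q u) ?r}"
      and "u \<noteq> w"
    then have "x \<in> cball (c u) (\<rho> u) \<inter> cball (c w) (\<rho> w)"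
      using inside by blast
    moreover have "u \<in> V" "w \<in> V"
      using u w unfolding N_def by auto
    ultimately show "E u w"
      using adj \<open>u \<noteq> w\<close> by blast
  qed (auto simp: N_def)
  then have ply: "card {u\<in>N. x \<in> cball (q u) ?r} \<le> ?K" for x
    using card_clique_le_biclique_number[OF \<open>finite V\<close>] by blast
  have "real (card N) * ?r ^ DIM('a) \<le> real ?K * (3 * ?r) ^ DIM('a)"
    using card_balls_bounded_ply[OF _ radius_pos[OF \<open>v \<in> V\<close>] _ near ply] \<open>finite V\<close>
      less_imp_le[OF radius_pos[OF \<open>v \<in> V\<close>]]
    unfolding N_def by simp
  also have "\<dots> = real (?K * 3 ^ DIM('a)) * ?r ^ DIM('a)"
    by (simp add: power_mult_distrib algebra_simps)
  finally have "real (card N) \<le> real (?K * 3 ^ DIM('a))"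
    by (rule mult_right_le_imp_le) (simp add: radius_pos \<open>v \<in> V\<close>)
  then show ?thesis
    unfolding degree_def N_def by (simp only: of_nat_le_iff)
qed

lemma iso_intersection_graph_cballs:
  fixes V :: "'v set" and \<B> :: "'a::euclidean_space set set"
  assumes "iso_intersection_graph V E \<B>" and "\<forall>S\<in>\<B>. closed_ball_set S"
  obtains c :: "'v \<Rightarrow> 'a" and \<rho> where "\<And>v. v \<in> V \<Longrightarrow> 0 < \<rho> v"
    and "\<And>u w. u \<in> V \<Longrightarrow> w \<in> V \<Longrightarrow> u \<noteq> w \<Longrightarrow>
           E u w \<longleftrightarrow> cball (c u) (\<rho> u) \<inter> cball (c w) (\<rho> w) \<noteq> {}"
proof -
  obtain f where "bij_betw f V \<B>"
    and adj: "\<forall>u\<in>V. \<forall>w\<in>V. u \<noteq> w \<longrightarrow> (E u w \<longleftrightarrow> f u \<inter> f w \<noteq> {})"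
    using assms(1) unfolding iso_intersection_graph_def by blast
  then have "\<forall>v\<in>V. \<exists>p r. 0 < r \<and> f v = cball p r"
    using assms(2) unfolding bij_betw_def closed_ball_set_def by blast
  then obtain c \<rho> where "\<And>v. v \<in> V \<Longrightarrow> 0 < \<rho> v \<and> f v = cball (c v) (\<rho> v)"
    by metis
  then show ?thesis
    using adj by (intro that[where c = c and \<rho> = \<rho>]) auto
qed

theorem mainTheorem11:
  fixes V :: "'v set" and E :: "'v \<Rightarrow> 'v \<Rightarrow> bool"
    and \<B> :: "'a::euclidean_space set set"
  assumes "simple_graph V E"
    and "V \<noteq> {}"
    and "\<forall>S\<in>\<B>. closed_ball_set S"
    and "iso_intersection_graph V E \<B>"
  shows "min_degree V E \<le> (2 * biclique_number V E + 1) * 3 ^ DIM('a)"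
proof -
  obtain c :: "'v \<Rightarrow> 'a" and \<rho> where radius_pos: "\<And>v. v \<in> V \<Longrightarrow> 0 < \<rho> v"
    and adj: "\<And>u w. u \<in> V \<Longrightarrow> w \<in> V \<Longrightarrow> u \<noteq> w \<Longrightarrow>
               E u w \<longleftrightarrow> cball (c u) (\<rho> u) \<inter> cball (c w) (\<rho> w) \<noteq> {}"
    using iso_intersection_graph_cballs[OF assms(4,3)] by metis
  have "finite V"
    using assms(1) unfolding simple_graph_def by blast
  then have "Min (\<rho> ` V) \<in> \<rho> ` V"
    using assms(2) by simp
  then obtain v where "v \<in> V" and "\<rho> v = Min (\<rho> ` V)"
    by (metis imageE)
  then have smallest: "\<And>u. u \<in> V \<Longrightarrow> \<rho> v \<le> \<rho> u"
    using \<open>finite V\<close> by simp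
  have "min_degree V E \<le> degree V E v"
    using min_degree_le_degree[OF \<open>finite V\<close> \<open>v \<in> V\<close>] .
  also have "\<dots> \<le> (2 * biclique_number V E + 1) * 3 ^ DIM('a)"
    using degree_le_of_smallest_ball[OF assms(1) \<open>v \<in> V\<close> radius_pos smallest adj] .
  finally show ?thesis .
qed

end
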